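(* Let $\mathbf H\subset GL_m(\mathbb C)$ be a finite unitary group with a fixed generating set $X_{\mathbf H}$, and $\mathbf G=\mathbf H\wr\mathrm{Sym}_n$ with the subgroup sequence, coset leaders, initial vector and generating sets $X_k$ of $\mathbf G_k$ described in the context. Then the Error Control Property holds for every consecutive pair $\mathbf G_{k-1}<\mathbf G_k$.
   Context: $\mathbf G$ is the group of $mn\times mn$ block permutation matrices with nonzero blocks in $\mathbf H$; elements written $\sigma(h_1,\dots,h_n)$, $\sigma\in\mathrm{Sym}_n$, $h_i\in\mathbf H$. Subgroups: $\mathbf G_0=\{I\}$, $\mathbf G_{2l-1}=(\mathbf H\wr\mathrm{Sym}_l)\oplus\{I_{m(n-l)}\}$ ($1\le l\le n$), $\mathbf G_{2l}=(\mathbf H\wr\mathrm{Sym}_l)\oplus\mathbf H\oplus\{I_{m(n-l-1)}\}$ ($1\le l\le n-1$). Coset leaders: $\operatorname{CL}(\mathbf G_1/\mathbf G_0)=\mathbf G_1$; $\operatorname{CL}(\mathbf G_{2l}/\mathbf G_{2l-1})=\{(1,\dots,1,h,1,\dots,1):h\in\mathbf H\text{ in slot }l+1\}$; $\operatorname{CL}(\mathbf G_{2l+1}/\mathbf G_{2l})=\{(j\ j{+}1\ \cdots\ l{+}1):1\le j\le l+1\}$. Initial vector $\mathbf x_0=(u_1\mathbf v_0,\dots,u_n\mathbf v_0)$ with $\mathbf v_0\in\mathbb C^m$ a unit vector fixed by no nonidentity element of $\mathbf H$ and real $0<u_1<\cdots<u_n$, $\|\mathbf x_0\|=1$. Generators: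 $X_{2l-1}=\{(h,1,\dots,1):h\in X_{\mathbf H}\}\cup\{(1\,2),(2\,3),\dots,(l{-}1\ l)\}$, $X_{2l}=X_{2l-1}\cup\{(1,\dots,1,h,1,\dots,1):h\in\mathbf H\text{ in slot }l+1\}$, $X_0=\emptyset$. Error Control Property for $H<K$ with coset leaders $\operatorname{CL}(K/H)$ and generating sets $X_H,X_K$: for all $b\in X_K\cup X_K^{-1}$ and $c\in\operatorname{CL}(K/H)$, either $bc\in\operatorname{CL}(K/H)$ or $c^{-1}bc\in X_H\cup X_H^{-1}$ (where $X^{-1}=\{a^{-1}:a\in X\}$). *)

theory Defs
  imports "Jordan_Normal_Form.Schur_Decomposition" "HOL-Combinatorics.Transposition"
    "HOL-Combinatorics.Permutations"
begin

text \<open>Blocks are indexed 0,...,n-1 (the paper uses 1,...,n); within a block, indices 0,...,m-1.\<close>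

definition mat_invs :: "nat \<Rightarrow> complex mat set \<Rightarrow> complex mat set" where
  "mat_invs d X = {b \<in> carrier_mat d d. \<exists>a\<in>X. a * b = 1\<^sub>m d \<and> b * a = 1\<^sub>m d}"

inductive_set mat_gen :: "nat \<Rightarrow> complex mat set \<Rightarrow> complex mat set" for d X where
  one: "1\<^sub>m d \<in> mat_gen d X"
| mult: "a \<in> X \<union> mat_invs d X \<Longrightarrow> b \<in> mat_gen d X \<Longrightarrow> a * b \<in> mat_gen d X"

definition unitary_mat :: "nat \<Rightarrow> complex mat \<Rightarrow> bool" where
  "unitary_mat d A \<longleftrightarrow> A \<in> carrier_mat d d \<and> A * mat_adjoint A = 1\<^sub>m d"

definition finite_unitary_group :: "nat \<Rightarrow> complex mat set \<Rightarrow> bool" where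
  "finite_unitary_group m H \<longleftrightarrow> finite H \<and> 1\<^sub>m m \<in> H \<and> (\<forall>A\<in>H. unitary_mat m A)
     \<and> (\<forall>A\<in>H. \<forall>B\<in>H. A * B \<in> H) \<and> mat_invs m H \<subseteq> H"

text \<open>Block permutation matrix of sigma (permutation of the block indices 0..n-1):
  the identity block sits in block row sigma(j), block column j, so that
  bperm (sigma o tau) = bperm sigma * bperm tau.\<close>
definition bperm :: "nat \<Rightarrow> nat \<Rightarrow> (nat \<Rightarrow> nat) \<Rightarrow> complex mat" where
  "bperm m n \<sigma> = mat (m*n) (m*n) (\<lambda>(i,j). if i div m = \<sigma> (j div m) \<and> i mod m = j mod m then 1 else 0)"

definition bdiag :: "nat \<Rightarrow> nat \<Rightarrow> (nat \<Rightarrow> complex mat) \<Rightarrow> complex mat" where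
  "bdiag m n h = mat (m*n) (m*n) (\<lambda>(i,j). if i div m = j div m then h (i div m) $$ (i mod m, j mod m) else 0)"

definition wr_elem :: "nat \<Rightarrow> nat \<Rightarrow> (nat \<Rightarrow> nat) \<Rightarrow> (nat \<Rightarrow> complex mat) \<Rightarrow> complex mat" where
  "wr_elem m n \<sigma> h = bperm m n \<sigma> * bdiag m n h"

definition slot_elem :: "nat \<Rightarrow> nat \<Rightarrow> nat \<Rightarrow> complex mat \<Rightarrow> complex mat" where
  "slot_elem m n s h = wr_elem m n id (\<lambda>i. if i = s then h else 1\<^sub>m m)"

definition perm_elem :: "nat \<Rightarrow> nat \<Rightarrow> (nat \<Rightarrow> nat) \<Rightarrow> complex mat" where
  "perm_elem m n \<sigma> = wr_elem m n \<sigma> (\<lambda>_. 1\<^sub>m m)"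

definition cyc :: "nat \<Rightarrow> nat \<Rightarrow> nat \<Rightarrow> nat" where
  "cyc a b k = (if a \<le> k \<and> k < b then k + 1 else if k = b then a else k)"

definition Gsub :: "nat \<Rightarrow> nat \<Rightarrow> complex mat set \<Rightarrow> nat \<Rightarrow> complex mat set" where
  "Gsub m n H k = (if k = 0 then {1\<^sub>m (m*n)}
     else {wr_elem m n \<sigma> h | \<sigma> h. \<sigma> permutes {..<(k+1) div 2} \<and>
            (\<forall>i<n. if i < (k+1) div 2 \<or> (even k \<and> i = k div 2) then h i \<in> H else h i = 1\<^sub>m m)})"

text \<open>Generating sets X_k (paper's X_{2l-1}, X_{2l}; X_0 = {}).
  Paper's transposition (i i+1), 1 \<le> i \<le> l-1, is transpose (i-1) i here;
  paper's slot l+1 is 0-based slot l.\<close>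
definition Xgen :: "nat \<Rightarrow> nat \<Rightarrow> complex mat set \<Rightarrow> nat \<Rightarrow> complex mat set" where
  "Xgen m n XH k = (if k = 0 then {} else
     let l = (k + 1) div 2 in
       {slot_elem m n 0 h | h. h \<in> XH}
       \<union> {perm_elem m n (transpose (i - 1) i) | i. 1 \<le> i \<and> i \<le> l - 1})"

definition Xgen_full :: "nat \<Rightarrow> nat \<Rightarrow> complex mat set \<Rightarrow> complex mat set \<Rightarrow> nat \<Rightarrow> complex mat set" where
  "Xgen_full m n H XH k = (if k = 0 \<or> odd k then Xgen m n XH k
     else Xgen m n XH k \<union> {slot_elem m n (k div 2) h | h. h \<in> H})"

text \<open>Coset leaders CL(G_k / G_{k-1}), k \<ge> 1.
  k = 1: G_1; k = 2l: (1,..,h,..,1) with h in paper slot l+1;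
  k = 2l+1: cycles (j j+1 ... l+1), 1 \<le> j \<le> l+1 (0-based: cyc (j-1) l).\<close>
definition CLset :: "nat \<Rightarrow> nat \<Rightarrow> complex mat set \<Rightarrow> nat \<Rightarrow> complex mat set" where
  "CLset m n H k = (if k = 1 then Gsub m n H 1
     else if even k then {slot_elem m n (k div 2) h | h. h \<in> H}
     else {perm_elem m n (cyc j (k div 2)) | j. j \<le> k div 2})"

definition ECP :: "nat \<Rightarrow> complex mat set \<Rightarrow> complex mat set \<Rightarrow> complex mat set \<Rightarrow> bool" where
  "ECP d CL XH XK \<longleftrightarrow> (\<forall>b \<in> XK \<union> mat_invs d XK. \<forall>c \<in> CL.
      b * c \<in> CL \<or> (\<exists>ci \<in> mat_invs d {c}. ci * b * c \<in> XH \<union> mat_invs d XH))"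

end

theory Submission
  imports Defs
begin

text \<open>
  By the multiplication law \<sigma>(h) \<tau>(g) = \<sigma>\<tau>(h \<circ> \<tau> \<cdot> g) of the wreath product,
  every product and conjugate of generators and coset leaders reduces to a computation with
  permutations of the block indices and with slot labels.
  For k = 1 the leaders form the subgroup G_1 itself, which absorbs its own generators.
  For k = 2l the leader c places some g in slot l: a generator b in slot l is absorbed,
  b c being again a leader, while every other generator (and its inverse) only involves
  slots and transpositions below l and hence commutes with c, so that c\<inverse> b c = b.
  For k = 2l + 1 the leader is the cycle (j j+1 \<dots> l): an adjacent transposition touching j
  turns it into the neighbouring cycle (j-1 \<dots> l) or (j+1 \<dots> l), any other adjacent
  transposition is conjugated to one below l, and a generator in slot 0 is conjugated into
  slot l when j = 0 and left unchanged when j > 0.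
\<close>

section \<open>Block matrices\<close>

lemma block_div_mod [simp]:
  assumes "r < (m::nat)"
  shows "(a * m + r) div m = a" and "(a * m + r) mod m = r"
  using assms by simp_all

lemma block_index_less:
  assumes "(i::nat) < m * n"
  shows "i div m < n" and "i mod m < m"
  using assms by (simp_all add: less_mult_imp_div_less mult.commute) (cases "m = 0"; simp)

lemma block_index_bound [simp]:
  assumes "a < n" "r < (m::nat)"
  shows "a * m + r < m * n"
proof -
  have "a * m + r < a * m + m" using assms by simp
  also have "\<dots> \<le> m * n" using assms
    by (metis Suc_leI add.commute mult.commute mult_Suc_right mult_le_mono2)
  finally show ?thesis .
qed

lemma block_eq_iff: "(i::nat) = j \<longleftrightarrow> i div m = j div m \<and> i mod m = j mod m"
  by (metis div_mult_mod_eq)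

lemma sum_blocks:
  "(\<Sum>k<(m::nat) * n. F (k div m) (k mod m)) = (\<Sum>a<n. \<Sum>r<m. F a r :: 'b::comm_monoid_add)"
proof -
  have "(\<Sum>k<m * n. F (k div m) (k mod m)) = (\<Sum>a<n. \<Sum>k\<in>{a * m..<a * m + m}. F (k div m) (k mod m))"
    using sum.nat_group[of "\<lambda>k. F (k div m) (k mod m)" m n] by (simp add: mult.commute)
  also have "\<dots> = (\<Sum>a<n. \<Sum>r<m. F a r)"
  proof (rule sum.cong[OF refl])
    fix a
    have "F (k div m) (k mod m) = F a (k - a * m)" if "k \<in> {a * m..<a * m + m}" for k
      using that block_div_mod[of "k - a * m" m a] by auto
    then show "(\<Sum>k\<in>{a * m..<a * m + m}. F (k div m) (k mod m)) = (\<Sum>r<m. F a r)"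
      by (intro sum.reindex_bij_witness[of _ "\<lambda>r. a * m + r" "\<lambda>k. k - a * m"]) auto
  qed
  finally show ?thesis .
qed

lemma bperm_carrier [simp]: "bperm m n \<sigma> \<in> carrier_mat (m * n) (m * n)"
  by (simp add: bperm_def)

lemma bdiag_carrier [simp]: "bdiag m n h \<in> carrier_mat (m * n) (m * n)"
  by (simp add: bdiag_def)

lemma wr_elem_carrier [simp]: "wr_elem m n \<sigma> h \<in> carrier_mat (m * n) (m * n)"
  unfolding wr_elem_def by (rule mult_carrier_mat[OF bperm_carrier bdiag_carrier])

lemma slot_elem_carrier [simp]: "slot_elem m n s h \<in> carrier_mat (m * n) (m * n)"
  by (simp add: slot_elem_def)

lemma index_bperm [simp]:
  "i < m * n \<Longrightarrow> j < m * n \<Longrightarrow>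
    bperm m n \<sigma> $$ (i, j) = (if i div m = \<sigma> (j div m) \<and> i mod m = j mod m then 1 else 0)"
  by (simp add: bperm_def)

lemma index_bdiag [simp]:
  "i < m * n \<Longrightarrow> j < m * n \<Longrightarrow>
    bdiag m n h $$ (i, j) = (if i div m = j div m then h (i div m) $$ (i mod m, j mod m) else 0)"
  by (simp add: bdiag_def)

lemma index_mult_bperm:
  assumes "A \<in> carrier_mat N (m * n)" and "i < N" "j < m * n" "\<tau> (j div m) < n"
  shows "(A * bperm m n \<tau>) $$ (i, j) = A $$ (i, \<tau> (j div m) * m + j mod m)"
proof -
  let ?k = "\<tau> (j div m) * m + j mod m"
  have jm: "j mod m < m" using block_index_less \<open>j < m * n\<close> by blast
  have "?k < m * n" using \<open>\<tau> (j div m) < n\<close> jm by simp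
  have col: "bperm m n \<tau> $$ (k, j) = (if k = ?k then 1 else 0)" if "k < m * n" for k
  proof -
    have "k = ?k \<longleftrightarrow> k div m = \<tau> (j div m) \<and> k mod m = j mod m"
      using jm by (metis block_div_mod div_mult_mod_eq mult.commute)
    then show ?thesis using that \<open>j < m * n\<close> by (simp add: bperm_def)
  qed
  have "(A * bperm m n \<tau>) $$ (i, j) = (\<Sum>k<m * n. A $$ (i, k) * bperm m n \<tau> $$ (k, j))"
    using assms by (simp add: scalar_prod_def atLeast0LessThan bperm_def)
  also have "\<dots> = (\<Sum>k<m * n. if k = ?k then A $$ (i, k) else 0)"
    by (intro sum.cong) (simp_all add: col)
  also have "\<dots> = A $$ (i, ?k)" using \<open>?k < m * n\<close> by simp
  finally show ?thesis .
qed

lemma index_mult_bdiag: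
  assumes "A \<in> carrier_mat N (m * n)" and "i < N" "j < m * n"
  shows "(A * bdiag m n g) $$ (i, j) =
    (\<Sum>r<m. A $$ (i, j div m * m + r) * g (j div m) $$ (r, j mod m))"
proof -
  have jd: "j div m < n" using block_index_less \<open>j < m * n\<close> by blast
  have "(A * bdiag m n g) $$ (i, j) = (\<Sum>k<m * n. A $$ (i, k) * bdiag m n g $$ (k, j))"
    using assms by (simp add: scalar_prod_def atLeast0LessThan bdiag_def)
  also have "\<dots> = (\<Sum>k<m * n. (\<lambda>a r. if a = j div m then A $$ (i, a * m + r) * g a $$ (r, j mod m)
                                    else 0) (k div m) (k mod m))"
  proof (rule sum.cong[OF refl])
    fix k assume "k \<in> {..<m * n}"
    then have "k mod m < m" using block_index_less by simp
    then show "A $$ (i, k) * bdiag m n g $$ (k, j) = (\<lambda>a r. if a = j div m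
        then A $$ (i, a * m + r) * g a $$ (r, j mod m) else 0) (k div m) (k mod m)"
      using \<open>k \<in> {..<m * n}\<close> \<open>j < m * n\<close> by (auto simp: bdiag_def) (metis div_mult_mod_eq)
  qed
  also have "\<dots> = (\<Sum>a<n. \<Sum>r<m. if a = j div m then A $$ (i, a * m + r) * g a $$ (r, j mod m) else 0)"
    by (rule sum_blocks)
  also have "\<dots> = (\<Sum>a<n. if a = j div m then \<Sum>r<m. A $$ (i, a * m + r) * g a $$ (r, j mod m) else 0)"
    by (rule sum.cong) auto
  also have "\<dots> = (\<Sum>r<m. A $$ (i, j div m * m + r) * g (j div m) $$ (r, j mod m))"
    using jd by simp
  finally show ?thesis .
qed

lemma bperm_mult:
  assumes "\<forall>x<n. \<tau> x < n"
  shows "bperm m n \<sigma> * bperm m n \<tau> = bperm m n (\<sigma> \<circ> \<tau>)"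
proof (rule eq_matI)
  fix i j assume "i < dim_row (bperm m n (\<sigma> \<circ> \<tau>))" "j < dim_col (bperm m n (\<sigma> \<circ> \<tau>))"
  then have ij: "i < m * n" "j < m * n" by (simp_all add: bperm_def)
  then show "(bperm m n \<sigma> * bperm m n \<tau>) $$ (i, j) = bperm m n (\<sigma> \<circ> \<tau>) $$ (i, j)"
    using assms block_index_less[OF ij(2)]
    by (simp add: index_mult_bperm[of _ "m * n"])
qed (simp_all add: bperm_def)

lemma bdiag_mult:
  assumes "\<forall>x<n. h x \<in> carrier_mat m m \<and> g x \<in> carrier_mat m m"
  shows "bdiag m n h * bdiag m n g = bdiag m n (\<lambda>x. h x * g x)"
proof (rule eq_matI)
  fix i j assume "i < dim_row (bdiag m n (\<lambda>x. h x * g x))" "j < dim_col (bdiag m n (\<lambda>x. h x * g x))"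
  then have ij: "i < m * n" "j < m * n" by (simp_all add: bdiag_def)
  note i = block_index_less[OF ij(1)] and j = block_index_less[OF ij(2)]
  have "(bdiag m n h * bdiag m n g) $$ (i, j) =
      (\<Sum>r<m. (if i div m = j div m then h (i div m) $$ (i mod m, r) else 0) * g (j div m) $$ (r, j mod m))"
    using ij i j by (simp add: index_mult_bdiag[of _ "m * n"]) (auto intro!: sum.cong)
  also have "\<dots> = bdiag m n (\<lambda>x. h x * g x) $$ (i, j)"
    using ij i j assms by (auto simp: bdiag_def scalar_prod_def atLeast0LessThan intro!: sum.cong)
  finally show "(bdiag m n h * bdiag m n g) $$ (i, j) = bdiag m n (\<lambda>x. h x * g x) $$ (i, j)" .
qed (simp_all add: bdiag_def)

lemma bdiag_bperm:
  assumes "\<forall>x<n. \<sigma> x < n"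
  shows "bdiag m n h * bperm m n \<sigma> = bperm m n \<sigma> * bdiag m n (h \<circ> \<sigma>)"
proof (rule eq_matI)
  fix i j assume "i < dim_row (bperm m n \<sigma> * bdiag m n (h \<circ> \<sigma>))" "j < dim_col (bperm m n \<sigma> * bdiag m n (h \<circ> \<sigma>))"
  then have ij: "i < m * n" "j < m * n" by (simp_all add: bperm_def bdiag_def)
  note i = block_index_less[OF ij(1)] and j = block_index_less[OF ij(2)]
  have "(bperm m n \<sigma> * bdiag m n (h \<circ> \<sigma>)) $$ (i, j) =
      (if i div m = \<sigma> (j div m) then h (\<sigma> (j div m)) $$ (i mod m, j mod m) else 0)"
  proof -
    have "{r. i mod m = r \<and> r < m} = {i mod m}" using i by auto
    then show ?thesis using ij i j by (simp add: index_mult_bdiag[of _ "m * n"] of_bool_def[symmetric] Int_def)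
  qed
  also have "\<dots> = (bdiag m n h * bperm m n \<sigma>) $$ (i, j)"
    using ij i j assms by (simp add: index_mult_bperm[of _ "m * n"])
  finally show "(bdiag m n h * bperm m n \<sigma>) $$ (i, j) = (bperm m n \<sigma> * bdiag m n (h \<circ> \<sigma>)) $$ (i, j)"
    by simp
qed (simp_all add: bperm_def bdiag_def)

lemma bperm_cong: "\<forall>x<n. \<sigma> x = \<tau> x \<Longrightarrow> bperm m n \<sigma> = bperm m n \<tau>"
  by (rule eq_matI) (simp_all add: bperm_def block_index_less)

lemma bdiag_cong: "\<forall>x<n. h x = g x \<Longrightarrow> bdiag m n h = bdiag m n g"
  by (rule eq_matI) (simp_all add: bdiag_def block_index_less)

section \<open>The wreath product\<close>

lemma wr_elem_cong:
  "\<forall>x<n. \<sigma> x = \<tau> x \<Longrightarrow> \<forall>x<n. h x = g x \<Longrightarrow> wr_elem m n \<sigma> h = wr_elem m n \<tau> g"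
  unfolding wr_elem_def by (metis bperm_cong bdiag_cong)

lemma wr_elem_one: "wr_elem m n id (\<lambda>_. 1\<^sub>m m) = 1\<^sub>m (m * n)"
proof -
  have "bperm m n id = 1\<^sub>m (m * n)"
    by (rule eq_matI) (simp_all add: block_eq_iff[symmetric] bperm_def)
  moreover have "bdiag m n (\<lambda>_. 1\<^sub>m m) = 1\<^sub>m (m * n)"
    by (rule eq_matI) (auto simp: block_index_less bdiag_def intro: block_eq_iff[THEN iffD2])
  ultimately show ?thesis by (simp add: wr_elem_def)
qed

lemma wr_elem_mult:
  assumes \<tau>: "\<forall>x<n. \<tau> x < n"
    and carrier: "\<forall>x<n. h x \<in> carrier_mat m m" "\<forall>x<n. g x \<in> carrier_mat m m"
  shows "wr_elem m n \<sigma> h * wr_elem m n \<tau> g = wr_elem m n (\<sigma> \<circ> \<tau>) (\<lambda>x. h (\<tau> x) * g x)"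
proof -
  let ?P = "bperm m n" and ?D = "bdiag m n"
  have "wr_elem m n \<sigma> h * wr_elem m n \<tau> g = ?P \<sigma> * ((?D h * ?P \<tau>) * ?D g)"
    unfolding wr_elem_def by (simp add: assoc_mult_mat[of _ "m * n" "m * n" _ "m * n" _ "m * n"]
        mult_carrier_mat[of _ "m * n" "m * n"])
  also have "\<dots> = (?P \<sigma> * ?P \<tau>) * (?D (h \<circ> \<tau>) * ?D g)"
    unfolding bdiag_bperm[OF \<tau>] by (simp add: assoc_mult_mat[of _ "m * n" "m * n" _ "m * n" _ "m * n"]
        mult_carrier_mat[of _ "m * n" "m * n"])
  also have "\<dots> = ?P (\<sigma> \<circ> \<tau>) * ?D (\<lambda>x. h (\<tau> x) * g x)"
    using \<tau> carrier by (simp add: bperm_mult bdiag_mult)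
  finally show ?thesis unfolding wr_elem_def .
qed

lemma perm_elem_mult:
  "\<forall>x<n. \<tau> x < n \<Longrightarrow> perm_elem m n \<sigma> * perm_elem m n \<tau> = perm_elem m n (\<sigma> \<circ> \<tau>)"
  unfolding perm_elem_def by (simp add: wr_elem_mult)

lemma perm_elem_cong: "\<forall>x<n. \<sigma> x = \<tau> x \<Longrightarrow> perm_elem m n \<sigma> = perm_elem m n \<tau>"
  unfolding perm_elem_def by (simp add: wr_elem_cong)

lemma slot_elem_mult:
  assumes "h \<in> carrier_mat m m" "g \<in> carrier_mat m m"
  shows "slot_elem m n s h * slot_elem m n s g = slot_elem m n s (h * g)"
  unfolding slot_elem_def using assms by (simp add: wr_elem_mult) (rule wr_elem_cong; simp)

lemma slot_elem_one: "slot_elem m n s (1\<^sub>m m) = 1\<^sub>m (m * n)"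
  unfolding slot_elem_def by (simp add: wr_elem_one)

lemma mat_invs_singleton:
  assumes "A \<in> carrier_mat d d" "A' \<in> carrier_mat d d" "A * A' = 1\<^sub>m d" "A' * A = 1\<^sub>m d"
  shows "mat_invs d {A} = {A'}"
proof -
  have unique: "B = A'" if B: "B \<in> carrier_mat d d" "B * A = 1\<^sub>m d" for B
  proof -
    have "B = B * (A * A')" using B assms by simp
    also have "\<dots> = (B * A) * A'" by (rule assoc_mult_mat[symmetric, OF B(1) assms(1,2)])
    also have "\<dots> = A'" using B assms by simp
    finally show ?thesis .
  qed
  show ?thesis unfolding mat_invs_def using assms unique by blast
qed

lemma mat_invs_Un: "mat_invs d (X \<union> Y) = mat_invs d X \<union> mat_invs d Y"
  unfolding mat_invs_def by auto

lemma mat_invs_mono: "X \<subseteq> Y \<Longrightarrow> mat_invs d X \<subseteq> mat_invs d Y"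
  unfolding mat_invs_def by auto

lemma mat_invs_eq_UN: "mat_invs d X = (\<Union>a\<in>X. mat_invs d {a})"
  unfolding mat_invs_def by auto

lemma perm_elem_inverse:
  assumes "\<forall>x<n. \<pi> x < n \<and> \<pi>' x < n \<and> \<pi> (\<pi>' x) = x \<and> \<pi>' (\<pi> x) = x"
  shows "mat_invs (m * n) {perm_elem m n \<pi>} = {perm_elem m n \<pi>'}"
proof -
  have "perm_elem m n \<pi> * perm_elem m n \<pi>' = perm_elem m n id"
       "perm_elem m n \<pi>' * perm_elem m n \<pi> = perm_elem m n id"
    using assms by (simp_all add: perm_elem_mult perm_elem_cong)
  then show ?thesis
    by (intro mat_invs_singleton) (simp_all add: perm_elem_def wr_elem_one)
qed

lemma slot_elem_inverse:
  assumes "h \<in> carrier_mat m m" "h' \<in> carrier_mat m m" "h * h' = 1\<^sub>m m" "h' * h = 1\<^sub>m m"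
  shows "mat_invs (m * n) {slot_elem m n s h} = {slot_elem m n s h'}"
  using assms by (intro mat_invs_singleton) (simp_all add: slot_elem_mult slot_elem_one slot_elem_carrier)

lemma perm_elem_conj_wr_elem:
  assumes "\<forall>x<n. \<pi> x < n" "\<forall>x<n. \<tau> x < n" "\<forall>x<n. h x \<in> carrier_mat m m"
  shows "perm_elem m n \<pi>' * wr_elem m n \<tau> h * perm_elem m n \<pi> = wr_elem m n (\<pi>' \<circ> \<tau> \<circ> \<pi>) (h \<circ> \<pi>)"
proof -
  have "perm_elem m n \<pi>' * wr_elem m n \<tau> h = wr_elem m n (\<pi>' \<circ> \<tau>) (\<lambda>x. 1\<^sub>m m * h x)"
    unfolding perm_elem_def using assms by (simp add: wr_elem_mult)
  also have "\<dots> = wr_elem m n (\<pi>' \<circ> \<tau>) h"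
    using assms by (intro wr_elem_cong) auto
  finally have "perm_elem m n \<pi>' * wr_elem m n \<tau> h * perm_elem m n \<pi> =
      wr_elem m n (\<pi>' \<circ> \<tau> \<circ> \<pi>) (\<lambda>x. h (\<pi> x) * 1\<^sub>m m)"
    unfolding perm_elem_def using assms by (simp add: wr_elem_mult comp_assoc)
  also have "\<dots> = wr_elem m n (\<pi>' \<circ> \<tau> \<circ> \<pi>) (h \<circ> \<pi>)"
    using assms by (intro wr_elem_cong) auto
  finally show ?thesis .
qed

lemma perm_elem_conj_slot_elem:
  assumes "\<forall>x<n. \<pi> x < n" "\<forall>x<n. \<pi>' (\<pi> x) = x" "\<forall>x<n. \<pi> x = s \<longleftrightarrow> x = t"
    and "h \<in> carrier_mat m m"
  shows "perm_elem m n \<pi>' * slot_elem m n s h * perm_elem m n \<pi> = slot_elem m n t h"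
  unfolding slot_elem_def using assms
  by (subst perm_elem_conj_wr_elem) (auto intro!: wr_elem_cong)

lemma perm_elem_conj_perm_elem:
  assumes "\<forall>x<n. \<pi> x < n" "\<forall>x<n. \<tau> x < n" "\<forall>x<n. \<pi>' (\<tau> (\<pi> x)) = \<rho> x"
  shows "perm_elem m n \<pi>' * perm_elem m n \<tau> * perm_elem m n \<pi> = perm_elem m n \<rho>"
proof -
  have "perm_elem m n \<pi>' * perm_elem m n \<tau> * perm_elem m n \<pi> = wr_elem m n (\<pi>' \<circ> \<tau> \<circ> \<pi>) (\<lambda>_. 1\<^sub>m m)"
    unfolding perm_elem_def[of m n \<tau>] using assms by (subst perm_elem_conj_wr_elem) (auto simp: comp_def)
  also have "\<dots> = perm_elem m n \<rho>"
    unfolding perm_elem_def using assms by (intro wr_elem_cong) auto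
  finally show ?thesis .
qed

lemma slot_elem_conj_wr_elem:
  assumes "\<forall>x<n. \<tau> x = s \<longleftrightarrow> x = s" "h s = 1\<^sub>m m" "\<forall>x<n. h x \<in> carrier_mat m m"
    and "g \<in> carrier_mat m m" "g' \<in> carrier_mat m m" "g' * g = 1\<^sub>m m" "\<forall>x<n. \<tau> x < n"
  shows "slot_elem m n s g' * wr_elem m n \<tau> h * slot_elem m n s g = wr_elem m n \<tau> h"
proof -
  let ?g = "\<lambda>k x. if x = s then k else 1\<^sub>m m"
  let ?h = "\<lambda>x. ?g g' (\<tau> x) * h x"
  have carrier: "\<forall>x<n. ?g g' x \<in> carrier_mat m m" "\<forall>x<n. ?g g x \<in> carrier_mat m m"
    using assms(3,4,5) by auto
  have carrier_h: "\<forall>x<n. ?h x \<in> carrier_mat m m"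
    using assms(3,4,5) by (auto intro!: mult_carrier_mat[of _ m m])
  have "wr_elem m n id (?g g') * wr_elem m n \<tau> h = wr_elem m n (id \<circ> \<tau>) ?h"
    by (rule wr_elem_mult) (use assms carrier in auto)
  then have "wr_elem m n id (?g g') * wr_elem m n \<tau> h * wr_elem m n id (?g g) =
      wr_elem m n (id \<circ> \<tau> \<circ> id) (\<lambda>x. ?h (id x) * ?g g x)"
    using wr_elem_mult[where \<sigma> = "id \<circ> \<tau>" and \<tau> = id and h = ?h and g = "?g g"] carrier carrier_h by simp
  also have "\<dots> = wr_elem m n \<tau> h"
  proof (rule wr_elem_cong)
    show "\<forall>x<n. ?h (id x) * ?g g x = h x"
      using assms(1-6) by auto
  qed simp
  finally show ?thesis unfolding slot_elem_def .
qed

section \<open>Cycles and adjacent transpositions\<close>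

definition cyc_inv :: "nat \<Rightarrow> nat \<Rightarrow> nat \<Rightarrow> nat" where
  "cyc_inv a b k = (if a < k \<and> k \<le> b then k - 1 else if k = a then b else k)"

lemma cyc_less: "a \<le> b \<Longrightarrow> b < n \<Longrightarrow> x < n \<Longrightarrow> cyc a b x < n"
  by (auto simp: cyc_def)

lemma cyc_inv_less: "a \<le> b \<Longrightarrow> b < n \<Longrightarrow> x < n \<Longrightarrow> cyc_inv a b x < n"
  by (auto simp: cyc_inv_def)

lemma cyc_inv_cyc: "a \<le> b \<Longrightarrow> cyc_inv a b (cyc a b x) = x"
  by (auto simp: cyc_def cyc_inv_def)

lemma cyc_cyc_inv: "a \<le> b \<Longrightarrow> cyc a b (cyc_inv a b x) = x"
  by (auto simp: cyc_def cyc_inv_def)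

lemma cyc_0_eq_0_iff: "cyc 0 b x = 0 \<longleftrightarrow> x = b"
  by (auto simp: cyc_def)

lemma cyc_eq_0_iff: "0 < a \<Longrightarrow> a \<le> b \<Longrightarrow> cyc a b x = 0 \<longleftrightarrow> x = 0"
  by (auto simp: cyc_def)

lemma transpose_cyc_Suc: "Suc i \<le> b \<Longrightarrow> transpose i (Suc i) (cyc (Suc i) b x) = cyc i b x"
  by (auto simp: cyc_def transpose_def)

lemma transpose_cyc: "Suc a \<le> b \<Longrightarrow> transpose a (Suc a) (cyc a b x) = cyc (Suc a) b x"
  by (auto simp: cyc_def transpose_def)

lemma cyc_conj_transpose_below:
  "Suc i < a \<Longrightarrow> a \<le> b \<Longrightarrow> cyc_inv a b (transpose i (Suc i) (cyc a b x)) = transpose i (Suc i) x"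
  by (auto simp: cyc_def cyc_inv_def transpose_def)

lemma cyc_conj_transpose_above:
  "a \<le> i \<Longrightarrow> Suc (Suc i) \<le> b \<Longrightarrow>
    cyc_inv a b (transpose (Suc i) (Suc (Suc i)) (cyc a b x)) = transpose i (Suc i) x"
  by (auto simp: cyc_def cyc_inv_def transpose_def)

lemma cycle_inverse:
  assumes "j \<le> l" "l < n"
  shows "mat_invs (m * n) {perm_elem m n (cyc j l)} = {perm_elem m n (cyc_inv j l)}"
  using assms by (intro perm_elem_inverse) (simp add: cyc_less cyc_inv_less cyc_cyc_inv cyc_inv_cyc)

lemma cycle_conj_slot_0:
  assumes "j \<le> l" "l < n" "h \<in> carrier_mat m m"
  shows "perm_elem m n (cyc_inv j l) * slot_elem m n 0 h * perm_elem m n (cyc j l) =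
    (if j = 0 then slot_elem m n l h else slot_elem m n 0 h)"
proof (cases "j = 0")
  case True
  then show ?thesis
    using assms by (simp, intro perm_elem_conj_slot_elem) (simp_all add: cyc_less cyc_inv_cyc cyc_0_eq_0_iff)
next
  case False
  then show ?thesis
    using assms by (simp, intro perm_elem_conj_slot_elem) (simp_all add: cyc_less cyc_inv_cyc cyc_eq_0_iff)
qed

definition adjacent_swaps :: "nat \<Rightarrow> nat \<Rightarrow> nat \<Rightarrow> complex mat set" where
  "adjacent_swaps m n l = {perm_elem m n (transpose i (Suc i)) | i. Suc i < l}"

lemma mat_invs_adjacent_swaps:
  assumes "l \<le> n"
  shows "mat_invs (m * n) (adjacent_swaps m n l) \<subseteq> adjacent_swaps m n l"
proof -
  have "mat_invs (m * n) {perm_elem m n (transpose i (Suc i))} = {perm_elem m n (transpose i (Suc i))}"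
    if "Suc i < l" for i
    using that assms by (intro perm_elem_inverse) (auto simp: transpose_def)
  then show ?thesis
    unfolding mat_invs_eq_UN[of _ "adjacent_swaps m n l"] by (auto simp: adjacent_swaps_def)
qed

lemma adjacent_swap_times_cycle:
  assumes "i < l" "j \<le> l" "l < n"
  shows "perm_elem m n (transpose i (Suc i)) * perm_elem m n (cyc j l) \<in> (\<lambda>j. perm_elem m n (cyc j l)) ` {..l}
    \<or> perm_elem m n (cyc_inv j l) * perm_elem m n (transpose i (Suc i)) * perm_elem m n (cyc j l)
        \<in> adjacent_swaps m n l"
proof -
  have cyc: "\<forall>x<n. cyc j l x < n" and swap: "\<forall>x<n. transpose i (Suc i) x < n"
    using assms by (auto simp: cyc_less transpose_def)
  have "perm_elem m n (transpose i (Suc i)) * perm_elem m n (cyc j l) =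
      perm_elem m n (transpose i (Suc i) \<circ> cyc j l)"
    using cyc by (rule perm_elem_mult)
  note prod = this
  consider "Suc i = j" | "i = j" | "Suc i < j" | "j < i" by linarith
  then show ?thesis
  proof cases
    case 1
    then have "perm_elem m n (transpose i (Suc i) \<circ> cyc j l) = perm_elem m n (cyc i l)"
      using assms by (intro perm_elem_cong) (auto simp: transpose_cyc_Suc)
    then show ?thesis using prod assms by auto
  next
    case 2
    then have "perm_elem m n (transpose i (Suc i) \<circ> cyc j l) = perm_elem m n (cyc (Suc j) l)"
      using assms by (intro perm_elem_cong) (auto simp: transpose_cyc)
    then show ?thesis using prod assms 2 by auto
  next
    case 3
    then have "perm_elem m n (cyc_inv j l) * perm_elem m n (transpose i (Suc i)) * perm_elem m n (cyc j l) =
        perm_elem m n (transpose i (Suc i))"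
      using assms cyc swap by (intro perm_elem_conj_perm_elem) (auto simp: cyc_conj_transpose_below)
    then show ?thesis using 3 assms by (auto simp: adjacent_swaps_def)
  next
    case 4
    then obtain i' where i': "i = Suc i'" "j \<le> i'" by (cases i) auto
    then have "perm_elem m n (cyc_inv j l) * perm_elem m n (transpose i (Suc i)) * perm_elem m n (cyc j l) =
        perm_elem m n (transpose i' (Suc i'))"
      using assms cyc swap by (intro perm_elem_conj_perm_elem) (auto simp: cyc_conj_transpose_above)
    then show ?thesis using i' assms by (auto simp: adjacent_swaps_def)
  qed
qed

section \<open>Generators and coset leaders\<close>

lemma transpositions_eq_adjacent_swaps:
  "{perm_elem m n (transpose (i - 1) i) | i. 1 \<le> i \<and> i \<le> l - 1} = adjacent_swaps m n l"
proof -
  have "\<exists>i'. perm_elem m n (transpose (i - 1) i) = perm_elem m n (transpose i' (Suc i')) \<and> Suc i' < l"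
    if "1 \<le> i" "i \<le> l - 1" for i
    using that by (intro exI[of _ "i - 1"]) auto
  moreover have "\<exists>i'. perm_elem m n (transpose i (Suc i)) = perm_elem m n (transpose (i' - 1) i') \<and> 1 \<le> i' \<and> i' \<le> l - 1"
    if "Suc i < l" for i
    using that by (intro exI[of _ "Suc i"]) auto
  ultimately show ?thesis unfolding adjacent_swaps_def by blast
qed

lemma Xgen_eq:
  assumes "0 < k"
  shows "Xgen m n XH k = slot_elem m n 0 ` XH \<union> adjacent_swaps m n ((k + 1) div 2)"
  using assms unfolding Xgen_def Let_def transpositions_eq_adjacent_swaps by (simp add: Setcompr_eq_image)

lemma Xgen_full_odd:
  "Xgen_full m n H XH (2 * l + 1) = slot_elem m n 0 ` XH \<union> adjacent_swaps m n (Suc l)"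
  by (simp add: Xgen_full_def Xgen_eq)

lemma Xgen_full_even:
  "0 < l \<Longrightarrow> Xgen_full m n H XH (2 * l) =
    slot_elem m n 0 ` XH \<union> adjacent_swaps m n l \<union> slot_elem m n l ` H"
  by (auto simp: Xgen_full_def Xgen_eq)

lemma CLset_1:
  assumes "0 < n"
  shows "CLset m n H 1 = slot_elem m n 0 ` H"
proof -
  have G1: "CLset m n H 1 = {wr_elem m n id h | h. \<forall>i<n. if i = 0 then h i \<in> H else h i = 1\<^sub>m m}"
    by (simp add: CLset_def Gsub_def lessThan_Suc)
  have to_slot: "wr_elem m n id h = slot_elem m n 0 (h 0)" if "\<forall>i<n. if i = 0 then h i \<in> H else h i = 1\<^sub>m m" for h
    unfolding slot_elem_def using that by (intro wr_elem_cong) auto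
  have from_slot: "\<forall>i<n. if i = 0 then (if i = 0 then g else 1\<^sub>m m) \<in> H else (if i = 0 then g else 1\<^sub>m m) = 1\<^sub>m m"
    if "g \<in> H" for g
    using that by simp
  show ?thesis
    unfolding G1
  proof (intro equalityI subsetI)
    fix c assume "c \<in> {wr_elem m n id h | h. \<forall>i<n. if i = 0 then h i \<in> H else h i = 1\<^sub>m m}"
    then obtain h where "\<forall>i<n. if i = 0 then h i \<in> H else h i = 1\<^sub>m m" "c = wr_elem m n id h"
      by blast
    with to_slot assms show "c \<in> slot_elem m n 0 ` H" by force
  next
    fix c assume "c \<in> slot_elem m n 0 ` H"
    with from_slot show "c \<in> {wr_elem m n id h | h. \<forall>i<n. if i = 0 then h i \<in> H else h i = 1\<^sub>m m}"
      unfolding slot_elem_def by blast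
  qed
qed

lemma CLset_even: "0 < l \<Longrightarrow> CLset m n H (2 * l) = slot_elem m n l ` H"
  by (auto simp: CLset_def)

lemma CLset_odd: "0 < l \<Longrightarrow> CLset m n H (2 * l + 1) = (\<lambda>j. perm_elem m n (cyc j l)) ` {..l}"
  by (auto simp: CLset_def)

section \<open>The Error Control Property\<close>

locale matrix_group =
  fixes m :: nat and H :: "complex mat set"
  assumes carrier: "H \<subseteq> carrier_mat m m"
    and mult_closed: "a \<in> H \<Longrightarrow> b \<in> H \<Longrightarrow> a * b \<in> H"
    and inverse_closed: "a \<in> H \<Longrightarrow> \<exists>a'\<in>H. a * a' = 1\<^sub>m m \<and> a' * a = 1\<^sub>m m"

lemma finite_unitary_group_is_matrix_group:
  assumes "finite_unitary_group m H"
  shows "matrix_group m H"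
proof
  have unitary: "\<And>a. a \<in> H \<Longrightarrow> a \<in> carrier_mat m m \<and> a * mat_adjoint a = 1\<^sub>m m"
    and closed: "\<And>a b. a \<in> H \<Longrightarrow> b \<in> H \<Longrightarrow> a * b \<in> H"
    and invs: "mat_invs m H \<subseteq> H"
    using assms unfolding finite_unitary_group_def unitary_mat_def by blast+
  show "H \<subseteq> carrier_mat m m" "\<And>a b. a \<in> H \<Longrightarrow> b \<in> H \<Longrightarrow> a * b \<in> H"
    using unitary closed by blast+
  fix a assume a: "a \<in> H"
  then have a_carrier: "a \<in> carrier_mat m m" and right: "a * mat_adjoint a = 1\<^sub>m m"
    using unitary by blast+
  have adj_carrier: "mat_adjoint a \<in> carrier_mat m m"
    using a_carrier by (auto simp: mat_adjoint_def)
  have left: "mat_adjoint a * a = 1\<^sub>m m"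
    using mat_mult_left_right_inverse[OF a_carrier adj_carrier right] .
  have "mat_adjoint a \<in> H"
    using invs a adj_carrier left right unfolding mat_invs_def by blast
  with left right show "\<exists>a'\<in>H. a * a' = 1\<^sub>m m \<and> a' * a = 1\<^sub>m m" by blast
qed

context matrix_group
begin

lemma obtain_slot_elem_inverse:
  assumes "h \<in> H"
  obtains h' where "h' \<in> H" "h' * h = 1\<^sub>m m" "mat_invs (m * n) {slot_elem m n s h} = {slot_elem m n s h'}"
proof -
  obtain h' where "h' \<in> H" "h * h' = 1\<^sub>m m" "h' * h = 1\<^sub>m m" using inverse_closed assms by blast
  moreover have "h \<in> carrier_mat m m" "h' \<in> carrier_mat m m" using assms \<open>h' \<in> H\<close> carrier by auto
  ultimately show ?thesis using that[OF \<open>h' \<in> H\<close> \<open>h' * h = 1\<^sub>m m\<close>] slot_elem_inverse by simp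
qed

lemma mat_invs_slot_elems:
  assumes "S \<subseteq> H"
  shows "mat_invs (m * n) (slot_elem m n s ` S) \<subseteq> slot_elem m n s ` H"
proof -
  have "mat_invs (m * n) {slot_elem m n s h} \<subseteq> slot_elem m n s ` H" if "h \<in> H" for h
    using that by (rule obtain_slot_elem_inverse) auto
  then show ?thesis using assms unfolding mat_invs_eq_UN[of _ "slot_elem m n s ` S"] by blast
qed

lemma slot_elems_mult_closed:
  assumes "b \<in> slot_elem m n s ` H" "c \<in> slot_elem m n s ` H"
  shows "b * c \<in> slot_elem m n s ` H"
proof -
  obtain h g where "h \<in> H" "g \<in> H" "b = slot_elem m n s h" "c = slot_elem m n s g"
    using assms by blast
  moreover have "slot_elem m n s h * slot_elem m n s g = slot_elem m n s (h * g)"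
    using \<open>h \<in> H\<close> \<open>g \<in> H\<close> carrier by (intro slot_elem_mult) auto
  ultimately show ?thesis using mult_closed by auto
qed

lemma slot_elem_commutes_with_lower_generators:
  assumes "XH \<subseteq> H" "0 < l" "l \<le> n" "g \<in> H" "g' \<in> H" "g' * g = 1\<^sub>m m"
    and b: "b \<in> slot_elem m n 0 ` XH \<union> adjacent_swaps m n l \<union>
      mat_invs (m * n) (slot_elem m n 0 ` XH \<union> adjacent_swaps m n l)"
  shows "slot_elem m n l g' * b * slot_elem m n l g = b"
proof -
  have gg': "g \<in> carrier_mat m m" "g' \<in> carrier_mat m m" using assms carrier by auto
  have "b \<in> slot_elem m n 0 ` H \<union> adjacent_swaps m n l"
    using b mat_invs_slot_elems[OF \<open>XH \<subseteq> H\<close>] mat_invs_adjacent_swaps[OF \<open>l \<le> n\<close>] \<open>XH \<subseteq> H\<close>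
    unfolding mat_invs_Un by blast
  then show ?thesis
  proof
    assume "b \<in> slot_elem m n 0 ` H"
    then obtain h where "h \<in> H" "b = wr_elem m n id (\<lambda>i. if i = 0 then h else 1\<^sub>m m)"
      by (auto simp: slot_elem_def)
    then show ?thesis
      using assms gg' carrier by (auto intro!: slot_elem_conj_wr_elem)
  next
    assume "b \<in> adjacent_swaps m n l"
    then obtain i where "Suc i < l" "b = wr_elem m n (transpose i (Suc i)) (\<lambda>_. 1\<^sub>m m)"
      by (auto simp: adjacent_swaps_def perm_elem_def)
    then show ?thesis
      using assms gg' by (auto intro!: slot_elem_conj_wr_elem simp: transpose_def)
  qed
qed

lemma ECP_first:
  assumes "XH \<subseteq> H" "0 < n"
  shows "ECP (m * n) (CLset m n H 1) (Xgen_full m n H XH 0) (Xgen_full m n H XH 1)"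
proof -
  have XK: "Xgen_full m n H XH 1 = slot_elem m n 0 ` XH"
    using Xgen_full_odd[of m n H XH 0] by (simp add: adjacent_swaps_def)
  have "Xgen_full m n H XH 1 \<union> mat_invs (m * n) (Xgen_full m n H XH 1) \<subseteq> slot_elem m n 0 ` H"
    unfolding XK using mat_invs_slot_elems[OF assms(1)] assms(1) by blast
  then show ?thesis
    unfolding ECP_def CLset_1[OF assms(2)] using slot_elems_mult_closed by blast
qed

lemma ECP_even:
  assumes "XH \<subseteq> H" "0 < l" "l < n"
  shows "ECP (m * n) (CLset m n H (2 * l)) (Xgen_full m n H XH (2 * l - 1)) (Xgen_full m n H XH (2 * l))"
proof -
  let ?XP = "slot_elem m n 0 ` XH \<union> adjacent_swaps m n l"
  have "2 * l - 1 = 2 * (l - 1) + 1" "Suc (l - 1) = l" using \<open>0 < l\<close> by simp_all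
  then have XP: "Xgen_full m n H XH (2 * l - 1) = ?XP"
    using Xgen_full_odd[of m n H XH "l - 1"] by (simp only:)
  have XK: "Xgen_full m n H XH (2 * l) = ?XP \<union> slot_elem m n l ` H"
    using Xgen_full_even[OF \<open>0 < l\<close>] by simp
  show ?thesis
    unfolding ECP_def XP XK CLset_even[OF \<open>0 < l\<close>]
  proof (intro ballI)
    fix b c assume b: "b \<in> ?XP \<union> slot_elem m n l ` H \<union> mat_invs (m * n) (?XP \<union> slot_elem m n l ` H)"
      and c: "c \<in> slot_elem m n l ` H"
    then obtain g where g: "g \<in> H" "c = slot_elem m n l g" by blast
    then obtain g' where g': "g' \<in> H" "g' * g = 1\<^sub>m m"
      and c_inv: "mat_invs (m * n) {c} = {slot_elem m n l g'}"
      using obtain_slot_elem_inverse by metis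
    have "b \<in> ?XP \<union> mat_invs (m * n) ?XP \<or> b \<in> slot_elem m n l ` H"
      using b mat_invs_slot_elems[of H n l] unfolding mat_invs_Un by blast
    then show "b * c \<in> slot_elem m n l ` H \<or>
        (\<exists>c'\<in>mat_invs (m * n) {c}. c' * b * c \<in> ?XP \<union> mat_invs (m * n) ?XP)"
    proof
      assume "b \<in> ?XP \<union> mat_invs (m * n) ?XP"
      moreover from this have "slot_elem m n l g' * b * c = b"
        unfolding g(2) using assms g g' by (intro slot_elem_commutes_with_lower_generators) auto
      ultimately show ?thesis using c_inv by auto
    next
      assume "b \<in> slot_elem m n l ` H"
      then show ?thesis using c slot_elems_mult_closed by blast
    qed
  qed
qed

lemma ECP_odd:
  assumes "XH \<subseteq> H" "0 < l" "l < n"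
  shows "ECP (m * n) (CLset m n H (2 * l + 1)) (Xgen_full m n H XH (2 * l)) (Xgen_full m n H XH (2 * l + 1))"
proof -
  let ?XP = "Xgen_full m n H XH (2 * l)"
  have XP: "?XP = slot_elem m n 0 ` XH \<union> adjacent_swaps m n l \<union> slot_elem m n l ` H"
    using Xgen_full_even[OF \<open>0 < l\<close>] by simp
  show ?thesis
    unfolding ECP_def Xgen_full_odd CLset_odd[OF \<open>0 < l\<close>]
  proof (intro ballI)
    fix b c
    assume b: "b \<in> slot_elem m n 0 ` XH \<union> adjacent_swaps m n (Suc l) \<union>
        mat_invs (m * n) (slot_elem m n 0 ` XH \<union> adjacent_swaps m n (Suc l))"
      and c: "c \<in> (\<lambda>j. perm_elem m n (cyc j l)) ` {..l}"
    then obtain j where j: "j \<le> l" "c = perm_elem m n (cyc j l)" by blast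
    let ?c' = "perm_elem m n (cyc_inv j l)"
    have c_inv: "mat_invs (m * n) {c} = {?c'}"
      unfolding j(2) using j(1) \<open>l < n\<close> by (rule cycle_inverse)
    have "b \<in> slot_elem m n 0 ` XH \<union> mat_invs (m * n) (slot_elem m n 0 ` XH) \<or> b \<in> adjacent_swaps m n (Suc l)"
      using b mat_invs_adjacent_swaps[of "Suc l" n m] \<open>l < n\<close> unfolding mat_invs_Un by auto
    then show "b * c \<in> (\<lambda>j. perm_elem m n (cyc j l)) ` {..l} \<or>
        (\<exists>c'\<in>mat_invs (m * n) {c}. c' * b * c \<in> ?XP \<union> mat_invs (m * n) ?XP)"
    proof
      assume b0: "b \<in> slot_elem m n 0 ` XH \<union> mat_invs (m * n) (slot_elem m n 0 ` XH)"
      then obtain h where h: "h \<in> H" "b = slot_elem m n 0 h"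
        using mat_invs_slot_elems[OF \<open>XH \<subseteq> H\<close>] \<open>XH \<subseteq> H\<close> by blast
      have "?c' * b * c = (if j = 0 then slot_elem m n l h else b)"
        unfolding h(2) j(2) using j(1) \<open>l < n\<close> h(1) carrier by (intro cycle_conj_slot_0) auto
      moreover have "b \<in> ?XP \<union> mat_invs (m * n) ?XP"
        using b0 mat_invs_mono[of "slot_elem m n 0 ` XH" ?XP] unfolding XP by blast
      ultimately have "?c' * b * c \<in> ?XP \<union> mat_invs (m * n) ?XP"
        using h(1) unfolding XP by auto
      then show ?thesis using c_inv by auto
    next
      assume "b \<in> adjacent_swaps m n (Suc l)"
      then obtain i where i: "i < l" "b = perm_elem m n (transpose i (Suc i))"
        by (auto simp: adjacent_swaps_def)
      then have "b * c \<in> (\<lambda>j. perm_elem m n (cyc j l)) ` {..l} \<or> ?c' * b * c \<in> ?XP"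
        using adjacent_swap_times_cycle[OF i(1) j(1) \<open>l < n\<close>] unfolding j(2) XP by blast
      then show ?thesis using c_inv by auto
    qed
  qed
qed

end

theorem mainTheorem9:
  fixes m n :: nat and H XH :: "complex mat set"
    and v0 :: "complex vec" and u :: "nat \<Rightarrow> real"
  assumes "m \<ge> 1" and "n \<ge> 1"
    and "finite_unitary_group m H"
    and "XH \<subseteq> H" and "mat_gen m XH = H"
    and "v0 \<in> carrier_vec m" and "(\<Sum>i<m. (cmod (v0 $ i))\<^sup>2) = 1"
    and "\<forall>h\<in>H. h *\<^sub>v v0 = v0 \<longrightarrow> h = 1\<^sub>m m"
    and "0 < u 0" and "\<forall>i j. i < j \<and> j < n \<longrightarrow> u i < u j"
    and "(\<Sum>i<n. (u i)\<^sup>2) = 1"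
  shows "\<forall>k. 1 \<le> k \<and> k \<le> 2 * n - 1 \<longrightarrow>
           ECP (m * n) (CLset m n H k) (Xgen_full m n H XH (k - 1)) (Xgen_full m n H XH k)"
proof (intro allI impI)
  interpret matrix_group m H
    using \<open>finite_unitary_group m H\<close> by (rule finite_unitary_group_is_matrix_group)
  fix k assume "1 \<le> k \<and> k \<le> 2 * n - 1"
  then have "k = 1 \<or> (\<exists>l. 0 < l \<and> l < n \<and> k = 2 * l) \<or> (\<exists>l. 0 < l \<and> l < n \<and> k = 2 * l + 1)"
    by presburger
  then show "ECP (m * n) (CLset m n H k) (Xgen_full m n H XH (k - 1)) (Xgen_full m n H XH k)"
    using ECP_first[of XH n] ECP_even[of XH] ECP_odd[of XH] \<open>XH \<subseteq> H\<close> \<open>n \<ge> 1\<close> by auto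
qed

end
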